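(* Let $\Sigma=(V,E,c)$ be an undirected network with exactly three boundary vertices $A_1,A_2,A_3$. Then $\Sigma$ decomposes into three subnetworks $\Sigma_{ij}=(V,E,c_{ij})$, $1\le i<j\le 3$ (i.e. $\sum_{i<j}c_{ij}^e=c^e$ for all $e\in E$ with each $c_{ij}\ge 0$), such that for each $i<j$ $$S_{\Sigma_{ij}}(A_i)=S_{\Sigma_{ij}}(A_j)=\tfrac12 I(A_i:A_j),\qquad S_{\Sigma_{ij}}(A_k)=0\ \ (k\neq i,j),$$ where $I(A_i:A_j)=S_\Sigma(A_i)+S_\Sigma(A_j)-S_\Sigma(A_iA_j)$. In particular, $\Sigma_{ij}$ connects only $A_i$ and $A_j$ (no other pair of distinct boundary vertices is joined by a path of positive-capacity edges in $\Sigma_{ij}$), $\sum_{i<j}S_{\Sigma_{ij}}(A_k)=S_\Sigma(A_k)$ for every $k$, and the $A_i:A_j$ mutual information computed on $\Sigma_{ij}$ equals that computed on $\Sigma$.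
   Context: An undirected network $\Sigma=(V,E,c)$ is a finite graph with capacity function $c:E\to\mathbb R_{\ge0}$ and a designated set $\partial\Sigma\subset V$ of boundary vertices. Fix an arbitrary orientation of each edge; a flow is a function $v:E\to\mathbb R$ with $|v^e|\le c^e$ for all $e$ and with conservation at every non-boundary vertex (net flow into the vertex equals net flow out, negative values meaning flow against the chosen orientation). Extending $v$ to reversed edges by $v^{\tilde e}=-v^e$, the flux of $v$ out of $A\subset\partial\Sigma$ is $S_\Sigma(A;v)=\sum_{e\in E\sqcup\tilde E:\,s(e)\in A}v^e$, and $S_\Sigma(A)$ is the maximum of $S_\Sigma(A;v)$ over all flows. A subnetwork of $\Sigma$ is a network $(V,E,c_1)$ with $0\le c_1\le c$ edgewise and the same boundary; $\Sigma$ decomposes into subnetworks $(V,E,c_i)$ if their capacities sum to $c$ on every edge. Here $A_iA_j$ denotes the boundary set $\{A_i,A_j\}$. *)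

theory Defs
  imports Main "HOL-Library.Extended_Real" Complex_Main
begin

text \<open>An undirected network: finite vertex set V, finite edge set E, each edge e
  carrying an arbitrary fixed orientation from src e to tgt e, a capacity c,
  and a set of boundary vertices bd.\<close>

definition network ::
  "'v set \<Rightarrow> 'e set \<Rightarrow> ('e \<Rightarrow> 'v) \<Rightarrow> ('e \<Rightarrow> 'v) \<Rightarrow> ('e \<Rightarrow> real) \<Rightarrow> 'v set \<Rightarrow> bool" where
  "network V E src tgt c bd \<longleftrightarrow> finite V \<and> finite E \<and>
     (\<forall>e\<in>E. src e \<in> V \<and> tgt e \<in> V) \<and> (\<forall>e\<in>E. 0 \<le> c e) \<and> bd \<subseteq> V"

definition is_flow ::
  "'v set \<Rightarrow> 'e set \<Rightarrow> ('e \<Rightarrow> 'v) \<Rightarrow> ('e \<Rightarrow> 'v) \<Rightarrow> ('e \<Rightarrow> real) \<Rightarrow> 'v set \<Rightarrow> ('e \<Rightarrow> real) \<Rightarrow> bool" where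
  "is_flow V E src tgt c bd v \<longleftrightarrow>
     (\<forall>e\<in>E. \<bar>v e\<bar> \<le> c e) \<and>
     (\<forall>x\<in>V - bd. (\<Sum>e\<in>{e\<in>E. tgt e = x}. v e) = (\<Sum>e\<in>{e\<in>E. src e = x}. v e))"

text \<open>Flux out of A: sum over E and reversed edges (source tgt e, value - v e)
  of edges whose source lies in A.\<close>
definition flux :: "'e set \<Rightarrow> ('e \<Rightarrow> 'v) \<Rightarrow> ('e \<Rightarrow> 'v) \<Rightarrow> 'v set \<Rightarrow> ('e \<Rightarrow> real) \<Rightarrow> real" where
  "flux E src tgt A v = (\<Sum>e\<in>{e\<in>E. src e \<in> A}. v e) + (\<Sum>e\<in>{e\<in>E. tgt e \<in> A}. - v e)"

definition S_net ::
  "'v set \<Rightarrow> 'e set \<Rightarrow> ('e \<Rightarrow> 'v) \<Rightarrow> ('e \<Rightarrow> 'v) \<Rightarrow> ('e \<Rightarrow> real) \<Rightarrow> 'v set \<Rightarrow> 'v set \<Rightarrow> real" where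
  "S_net V E src tgt c bd A = Sup {flux E src tgt A v | v. is_flow V E src tgt c bd v}"

definition mutual_info ::
  "'v set \<Rightarrow> 'e set \<Rightarrow> ('e \<Rightarrow> 'v) \<Rightarrow> ('e \<Rightarrow> 'v) \<Rightarrow> ('e \<Rightarrow> real) \<Rightarrow> 'v set \<Rightarrow> 'v \<Rightarrow> 'v \<Rightarrow> real" where
  "mutual_info V E src tgt c bd a b =
     S_net V E src tgt c bd {a} + S_net V E src tgt c bd {b} - S_net V E src tgt c bd {a, b}"

definition pos_adj :: "'e set \<Rightarrow> ('e \<Rightarrow> 'v) \<Rightarrow> ('e \<Rightarrow> 'v) \<Rightarrow> ('e \<Rightarrow> real) \<Rightarrow> 'v \<Rightarrow> 'v \<Rightarrow> bool" where
  "pos_adj E src tgt c x y \<longleftrightarrow>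
     (\<exists>e\<in>E. 0 < c e \<and> ((src e = x \<and> tgt e = y) \<or> (src e = y \<and> tgt e = x)))"

definition pos_connected :: "'e set \<Rightarrow> ('e \<Rightarrow> 'v) \<Rightarrow> ('e \<Rightarrow> 'v) \<Rightarrow> ('e \<Rightarrow> real) \<Rightarrow> 'v \<Rightarrow> 'v \<Rightarrow> bool" where
  "pos_connected E src tgt c = (pos_adj E src tgt c)\<^sup>*\<^sup>*"

end

theory Submission
  imports Defs "HOL-Analysis.Analysis"
begin

text \<open>Write S_i for the maximal flux out of A_i. Reversing flows shows S(A_iA_j) = S_k for
  {i, j, k} = {1, 2, 3}, hence S_i = I(A_i:A_j)/2 + I(A_i:A_k)/2. Augmenting-path arguments in
  the residual graph give a flow g that saturates S_1 out of A_1 and S_3 into A_3 at the same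
  time, and likewise a flow h for A_1 and A_2. The half-sum (g + h)/2 sends I(A_1:A_2)/2 to A_2
  and I(A_1:A_3)/2 to A_3, the half-difference (g - h)/2 sends I(A_2:A_3)/2 from A_2 to A_3,
  and edgewise |g + h|/2 + |g - h|/2 = max |g| |h| \<le> c. Splitting the half-sum conformally into
  an A_1A_2 part and an A_1A_3 part gives three flows whose absolute values, with the unused
  capacity added to one of them, form the capacities c_ij. Each c_ij carries its prescribed
  fluxes, S is superadditive in the capacity, and the prescribed fluxes add up to exactly S_1,
  S_2, S_3, so all inequalities are tight. A terminal of zero flux is not joined to another
  terminal by positive-capacity edges: such a path would be augmenting for the zero flow.\<close>

lemma abs_half_sum_add_abs_half_diff:
  fixes a b :: real
  shows "\<bar>(a + b) / 2\<bar> + \<bar>(a - b) / 2\<bar> = max \<bar>a\<bar> \<bar>b\<bar>"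
  by (auto simp: abs_if max_def field_simps)

lemma abs_scaled_part_add_abs_rest:
  fixes w z t :: real
  assumes "min 0 w \<le> z" "z \<le> max 0 w" "0 \<le> t" "t \<le> 1"
  shows "\<bar>t * z\<bar> + \<bar>w - t * z\<bar> = \<bar>w\<bar>"
proof -
  have "t * z \<le> z \<and> 0 \<le> t * z \<or> z \<le> t * z \<and> t * z \<le> 0"
    using assms mult_left_le_one_le[of z t] mult_left_le_one_le[of "- z" t]
    by (cases "0 \<le> z") (auto simp: mult_nonneg_nonpos)
  then show ?thesis
    using assms by (auto simp: abs_if)
qed

lemma eventually_at_right_0_within_bounds:
  fixes l u x d :: real
  assumes "l \<le> x" "x \<le> u" "0 < d \<Longrightarrow> x < u" "d < 0 \<Longrightarrow> l < x"
  shows "\<forall>\<^sub>F t in at_right 0. l \<le> x + t * d \<and> x + t * d \<le> u"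
proof -
  have lim: "((\<lambda>t. x + t * d) \<longlongrightarrow> x) (at_right 0)"
    by (auto intro!: tendsto_eq_intros)
  have pos: "\<forall>\<^sub>F t in at_right (0::real). 0 < t"
    by (rule eventually_at_right_less)
  have upper: "\<forall>\<^sub>F t in at_right 0. x + t * d \<le> u"
  proof (cases "0 < d")
    case True
    show ?thesis
      using order_tendstoD(2)[OF lim assms(3)[OF True]] by (auto elim: eventually_mono)
  next
    case False
    have "x + t * d \<le> u" if "0 < t" for t
      using False assms(2) mult_nonneg_nonpos[of t d] that by linarith
    then show ?thesis
      using pos by (auto elim: eventually_mono)
  qed
  have lower: "\<forall>\<^sub>F t in at_right 0. l \<le> x + t * d"
  proof (cases "d < 0")
    case True
    show ?thesis
      using order_tendstoD(1)[OF lim assms(4)[OF True]] by (auto elim: eventually_mono)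
  next
    case False
    have "l \<le> x + t * d" if "0 < t" for t
      using False assms(1) mult_nonneg_nonneg[of t d] that by linarith
    then show ?thesis
      using pos by (auto elim: eventually_mono)
  qed
  show ?thesis
    using upper lower by eventually_elim simp
qed

locale finite_network =
  fixes V :: "'v set" and E :: "'e set" and src tgt :: "'e \<Rightarrow> 'v"
  assumes finite_V: "finite V" and finite_E: "finite E"
    and ends_in_V: "\<forall>e\<in>E. src e \<in> V \<and> tgt e \<in> V"
begin

abbreviation "flow \<equiv> is_flow V E src tgt"
abbreviation "S \<equiv> S_net V E src tgt"
abbreviation "I \<equiv> mutual_info V E src tgt"
abbreviation "net_flux \<equiv> flux E src tgt"

subsection \<open>Divergence and flows\<close>

definition divergence :: "('e \<Rightarrow> real) \<Rightarrow> 'v \<Rightarrow> real" where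
  "divergence v x = (\<Sum>e\<in>{e\<in>E. src e = x}. v e) - (\<Sum>e\<in>{e\<in>E. tgt e = x}. v e)"

definition bounded_flow :: "('e \<Rightarrow> real) \<Rightarrow> ('e \<Rightarrow> real) \<Rightarrow> 'v set \<Rightarrow> ('e \<Rightarrow> real) \<Rightarrow> bool" where
  "bounded_flow l u T v \<longleftrightarrow>
     (\<forall>e\<in>E. l e \<le> v e \<and> v e \<le> u e) \<and> (\<forall>x\<in>V - T. divergence v x = 0)"

lemma divergence_eq_sum:
  "divergence v x = (\<Sum>e\<in>E. (of_bool (src e = x) - of_bool (tgt e = x)) * v e)"
  unfolding divergence_def using finite_E
  by (auto simp: sum.inter_filter sum_subtractf[symmetric] intro!: sum.cong)

lemma net_flux_eq_sum:
  "net_flux Y v = (\<Sum>e\<in>E. (of_bool (src e \<in> Y) - of_bool (tgt e \<in> Y)) * v e)"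
  unfolding flux_def using finite_E
  by (auto simp: sum.inter_filter sum_negf sum_subtractf[symmetric] intro!: sum.cong)

lemma divergence_add: "divergence (\<lambda>e. v e + w e) x = divergence v x + divergence w x"
  unfolding divergence_def by (simp add: sum.distrib)

lemma divergence_diff: "divergence (\<lambda>e. v e - w e) x = divergence v x - divergence w x"
  unfolding divergence_def by (simp add: sum_subtractf)

lemma divergence_minus: "divergence (\<lambda>e. - v e) x = - divergence v x"
  unfolding divergence_def by (simp add: sum_negf)

lemma divergence_scale: "divergence (\<lambda>e. a * v e) x = a * divergence v x"
  unfolding divergence_def by (simp add: sum_distrib_left right_diff_distrib)

lemma divergence_zero: "divergence (\<lambda>_. 0) x = 0"
  unfolding divergence_def by simp

lemma divergence_edge_indicator:
  "e \<in> E \<Longrightarrow> divergence (\<lambda>e'. of_bool (e' = e)) x = of_bool (src e = x) - of_bool (tgt e = x)"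
  unfolding divergence_eq_sum using finite_E by (simp add: if_distrib cong: if_cong)

lemma net_flux_add: "net_flux Y (\<lambda>e. v e + w e) = net_flux Y v + net_flux Y w"
  unfolding net_flux_eq_sum by (simp add: distrib_left sum.distrib)

lemma net_flux_eq_sum_divergence:
  assumes "finite Y"
  shows "net_flux Y v = (\<Sum>y\<in>Y. divergence v y)"
proof -
  have indicator_sum: "(\<Sum>y\<in>Y. of_bool (z = y) :: real) = of_bool (z \<in> Y)" for z
    using assms by (simp add: of_bool_def sum.delta)
  have "(\<Sum>y\<in>Y. divergence v y) =
      (\<Sum>e\<in>E. \<Sum>y\<in>Y. (of_bool (src e = y) - of_bool (tgt e = y)) * v e)"
    unfolding divergence_eq_sum by (rule sum.swap)
  also have "\<dots> = net_flux Y v"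
    unfolding net_flux_eq_sum
    by (simp add: sum_distrib_right[symmetric] sum_subtractf indicator_sum)
  finally show ?thesis ..
qed

lemma net_flux_singleton: "net_flux {x} v = divergence v x"
  by (simp add: net_flux_eq_sum_divergence)

lemma net_flux_doubleton: "x \<noteq> y \<Longrightarrow> net_flux {x, y} v = divergence v x + divergence v y"
  by (simp add: net_flux_eq_sum_divergence)

lemma net_flux_eq_sum_divergence_if_conserved:
  assumes "finite X" "X \<subseteq> W" "W \<subseteq> X \<union> V" "\<forall>x\<in>W - X. divergence v x = 0"
  shows "net_flux W v = (\<Sum>x\<in>X. divergence v x)"
proof -
  have "finite W"
    using assms(1,3) finite_V finite_subset by blast
  then have "net_flux W v = (\<Sum>x\<in>W. divergence v x)"
    by (rule net_flux_eq_sum_divergence)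
  also have "\<dots> = (\<Sum>x\<in>X. divergence v x)"
    using assms \<open>finite W\<close> by (intro sum.mono_neutral_right) auto
  finally show ?thesis .
qed

lemma divergence_sum_boundary:
  assumes "T \<subseteq> V" "\<forall>x\<in>V - T. divergence v x = 0"
  shows "(\<Sum>x\<in>T. divergence v x) = 0"
proof -
  have "(\<Sum>x\<in>T. divergence v x) = (\<Sum>x\<in>V. divergence v x)"
    using assms finite_V by (intro sum.mono_neutral_left) auto
  also have "\<dots> = net_flux V v"
    by (rule net_flux_eq_sum_divergence[OF finite_V, symmetric])
  also have "\<dots> = 0"
    unfolding net_flux_eq_sum using ends_in_V by (intro sum.neutral) auto
  finally show ?thesis .
qed

lemma is_flow_iff_bounded_flow: "flow c T v \<longleftrightarrow> bounded_flow (\<lambda>e. - c e) c T v"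
  unfolding is_flow_def bounded_flow_def divergence_def by (auto simp: abs_le_iff)

lemma flowI:
  "\<forall>e\<in>E. \<bar>v e\<bar> \<le> c e \<Longrightarrow> \<forall>x\<in>V - T. divergence v x = 0 \<Longrightarrow> flow c T v"
  unfolding is_flow_iff_bounded_flow bounded_flow_def by (auto simp: abs_le_iff)

lemma flow_abs_le: "flow c T v \<Longrightarrow> e \<in> E \<Longrightarrow> \<bar>v e\<bar> \<le> c e"
  unfolding is_flow_def by auto

lemma flow_divergence_zero: "flow c T v \<Longrightarrow> x \<in> V - T \<Longrightarrow> divergence v x = 0"
  unfolding is_flow_iff_bounded_flow bounded_flow_def by auto

lemma flow_uminus: "flow c T v \<Longrightarrow> flow c T (\<lambda>e. - v e)"
  by (intro flowI) (auto simp: divergence_minus flow_divergence_zero flow_abs_le)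

lemma flow_zero: "\<forall>e\<in>E. 0 \<le> c e \<Longrightarrow> flow c T (\<lambda>_. 0)"
  by (intro flowI) (auto simp: divergence_zero)

lemma flow_divergence_three_terminals:
  assumes "flow c T v" "T = {a, b, d}" "distinct [a, b, d]" "T \<subseteq> V"
  shows "divergence v a + divergence v b + divergence v d = 0"
  using divergence_sum_boundary[of T v] assms by (simp add: flow_divergence_zero add.assoc)

subsection \<open>Maximal flows and augmenting paths\<close>

text \<open>The bounded flows form a compact subset of the product space over E, so a linear
  functional attains its maximum on them; this replaces an explicit max-flow algorithm.\<close>

lemma continuous_map_linear_functional:
  "continuous_map (product_topology (\<lambda>_. euclideanreal) E) euclideanreal (\<lambda>v. \<Sum>e\<in>E. b e * v e)"
  by (intro continuous_map_sum finite_E continuous_map_real_mult_left continuous_map_product_projection)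

lemma compactin_bounded_flows:
  "compactin (product_topology (\<lambda>_. euclideanreal) E)
    {v \<in> PiE E (\<lambda>e. {l e..u e}). \<forall>x\<in>V - T. divergence v x = 0}"
proof -
  let ?X = "product_topology (\<lambda>_. euclideanreal) E"
  define box where "box = PiE E (\<lambda>e. {l e..u e})"
  define K where "K = {v \<in> box. \<forall>x\<in>V - T. divergence v x = 0}"
  have box_compact: "compactin ?X box"
    by (simp add: box_def compactin_PiE)
  have "K = box \<inter> (\<Inter>x\<in>V - T. {v \<in> topspace ?X. divergence v x \<in> {0}})"
    unfolding K_def box_def by (auto simp: PiE_def Pi_def)
  moreover have "closedin ?X box"
    by (intro compactin_imp_closedin) (auto simp: box_compact Hausdorff_space_product_topology)
  moreover have "closedin ?X {v \<in> topspace ?X. divergence v x \<in> {0}}" for x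
    unfolding divergence_eq_sum
    by (rule closedin_continuous_map_preimage[OF continuous_map_linear_functional]) simp
  ultimately have "closedin ?X K"
    by (cases "V - T = {}") auto
  then have "compactin ?X K"
    by (rule closed_compactin[OF box_compact, rotated]) (auto simp: K_def)
  then show ?thesis
    by (simp add: K_def box_def)
qed

lemma bounded_flow_linear_max_exists:
  assumes "\<forall>e\<in>E. l e \<le> 0 \<and> 0 \<le> u e"
  shows "\<exists>v. bounded_flow l u T v \<and>
    (\<forall>v'. bounded_flow l u T v' \<longrightarrow> (\<Sum>e\<in>E. a e * v' e) \<le> (\<Sum>e\<in>E. a e * v e))"
proof -
  define K where "K = {v \<in> PiE E (\<lambda>e. {l e..u e}). \<forall>x\<in>V - T. divergence v x = 0}"
  have "compact ((\<lambda>v. \<Sum>e\<in>E. a e * v e) ` K)"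
    using image_compactin[OF compactin_bounded_flows continuous_map_linear_functional]
      compactin_euclidean_iff unfolding K_def by blast
  moreover have "restrict (\<lambda>_. 0) E \<in> K"
    using assms unfolding K_def divergence_def by auto
  ultimately obtain m where "m \<in> (\<lambda>v. \<Sum>e\<in>E. a e * v e) ` K"
    "\<forall>y\<in>(\<lambda>v. \<Sum>e\<in>E. a e * v e) ` K. y \<le> m"
    using compact_attains_sup by blast
  then obtain v where v: "v \<in> K" "\<forall>w\<in>K. (\<Sum>e\<in>E. a e * w e) \<le> (\<Sum>e\<in>E. a e * v e)"
    by auto
  show ?thesis
  proof (intro exI conjI allI impI)
    show "bounded_flow l u T v"
      using v(1) unfolding K_def bounded_flow_def by auto
    fix v' assume v': "bounded_flow l u T v'"
    have "divergence (restrict v' E) x = divergence v' x" for x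
      unfolding divergence_def by simp
    then have "restrict v' E \<in> K"
      using v' unfolding K_def bounded_flow_def by auto
    then show "(\<Sum>e\<in>E. a e * v' e) \<le> (\<Sum>e\<in>E. a e * v e)"
      using v(2) by fastforce
  qed
qed

lemma S_eq_maximum:
  "flow c T v \<Longrightarrow> \<forall>v'. flow c T v' \<longrightarrow> net_flux Y v' \<le> net_flux Y v \<Longrightarrow> S c T Y = net_flux Y v"
  unfolding S_net_def by (intro cSup_eq_maximum) auto

lemma S_maximizer_exists:
  assumes "\<forall>e\<in>E. 0 \<le> c e"
  shows "\<exists>v. flow c T v \<and> (\<forall>v'. flow c T v' \<longrightarrow> net_flux Y v' \<le> net_flux Y v)"
  using bounded_flow_linear_max_exists[of "\<lambda>e. - c e" c T "\<lambda>e. of_bool (src e \<in> Y) - of_bool (tgt e \<in> Y)"] assms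
  unfolding is_flow_iff_bounded_flow net_flux_eq_sum by auto

lemma net_flux_le_S:
  assumes "\<forall>e\<in>E. 0 \<le> c e" "flow c T v"
  shows "net_flux Y v \<le> S c T Y"
  using S_maximizer_exists[OF assms(1)] S_eq_maximum assms(2) by metis

lemma S_singleton_nonneg: "\<forall>e\<in>E. 0 \<le> c e \<Longrightarrow> 0 \<le> S c T {x}"
  using net_flux_le_S[OF _ flow_zero, where Y = "{x}"] by (simp add: net_flux_singleton divergence_zero)

definition residual :: "('e \<Rightarrow> real) \<Rightarrow> ('e \<Rightarrow> real) \<Rightarrow> ('e \<Rightarrow> real) \<Rightarrow> 'v \<Rightarrow> 'v \<Rightarrow> bool" where
  "residual l u v x y \<longleftrightarrow>
     (\<exists>e\<in>E. (src e = x \<and> tgt e = y \<and> v e < u e) \<or> (tgt e = x \<and> src e = y \<and> l e < v e))"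

lemma residual_path_direction:
  assumes "(residual l u v)\<^sup>*\<^sup>* a b"
  shows "\<exists>d. (\<forall>x. divergence d x = of_bool (x = a) - of_bool (x = b)) \<and>
    (\<forall>e\<in>E. 0 < d e \<longrightarrow> v e < u e) \<and> (\<forall>e\<in>E. d e < 0 \<longrightarrow> l e < v e)"
  using assms
proof (induction rule: rtranclp_induct)
  case base
  show ?case
    by (intro exI[of _ "\<lambda>_. 0"]) (simp add: divergence_zero)
next
  case (step y z)
  then obtain d where d: "\<forall>x. divergence d x = of_bool (x = a) - of_bool (x = y)"
    "\<forall>e\<in>E. 0 < d e \<longrightarrow> v e < u e" "\<forall>e\<in>E. d e < 0 \<longrightarrow> l e < v e"
    by blast
  from step.hyps(2) obtain e and s :: real where e: "e \<in> E"
    "s = 1 \<and> src e = y \<and> tgt e = z \<and> v e < u e \<or> s = -1 \<and> tgt e = y \<and> src e = z \<and> l e < v e"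
    unfolding residual_def by (metis (no_types))
  let ?d = "\<lambda>e'. d e' + s * of_bool (e' = e)"
  have "divergence ?d x = of_bool (x = a) - of_bool (x = z)" for x
    using d(1) e by (auto simp: divergence_add divergence_scale divergence_edge_indicator)
  moreover have "0 < ?d e' \<Longrightarrow> v e' < u e'" "?d e' < 0 \<Longrightarrow> l e' < v e'" if "e' \<in> E" for e'
    using d(2,3) e that by (cases "e' = e"; force)+
  ultimately show ?case
    by blast
qed

lemma residual_path_augment:
  assumes v: "bounded_flow l u T v" and ab: "a \<in> T" "b \<in> T"
    and path: "(residual l u v)\<^sup>*\<^sup>* a b"
  shows "\<exists>\<epsilon>>0. \<exists>v'. bounded_flow l u T v' \<and>
    (\<forall>x. divergence v' x = divergence v x + \<epsilon> * (of_bool (x = a) - of_bool (x = b)))"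
proof -
  obtain d where d: "\<forall>x. divergence d x = of_bool (x = a) - of_bool (x = b)"
    "\<forall>e\<in>E. 0 < d e \<longrightarrow> v e < u e" "\<forall>e\<in>E. d e < 0 \<longrightarrow> l e < v e"
    using residual_path_direction[OF path] by blast
  have "\<forall>\<^sub>F t in at_right 0. 0 < t \<and> (\<forall>e\<in>E. l e \<le> v e + t * d e \<and> v e + t * d e \<le> u e)"
    using v d(2,3) unfolding bounded_flow_def
    by (intro eventually_conj eventually_at_right_less eventually_ball_finite finite_E ballI
        eventually_at_right_0_within_bounds) auto
  then obtain \<epsilon> where \<epsilon>: "0 < \<epsilon>" "\<forall>e\<in>E. l e \<le> v e + \<epsilon> * d e \<and> v e + \<epsilon> * d e \<le> u e"
    using eventually_happens'[OF trivial_limit_at_right_real] by blast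
  have "divergence (\<lambda>e. v e + \<epsilon> * d e) x = divergence v x + \<epsilon> * (of_bool (x = a) - of_bool (x = b))"
    for x using d(1) by (simp add: divergence_add divergence_scale)
  moreover have "bounded_flow l u T (\<lambda>e. v e + \<epsilon> * d e)"
    using v \<epsilon>(2) ab unfolding bounded_flow_def by (auto simp: divergence_add divergence_scale d(1))
  ultimately show ?thesis
    using \<epsilon>(1) by blast
qed

lemma residual_rtranclp_in_V: "(residual l u v)\<^sup>*\<^sup>* a b \<Longrightarrow> b = a \<or> b \<in> V"
  by (induction rule: rtranclp_induct) (auto simp: residual_def dest: ends_in_V[rule_format])

text \<open>The set W of vertices reachable in the residual graph is a saturated cut: every edge
  leaving W is at its upper bound and every edge entering W at its lower bound.\<close>

lemma net_flux_le_residual_closure: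
  assumes v: "\<forall>e\<in>E. l e \<le> v e \<and> v e \<le> u e" and v': "\<forall>e\<in>E. l e \<le> v' e \<and> v' e \<le> u e"
    and W: "W = {y. \<exists>x\<in>X. (residual l u v)\<^sup>*\<^sup>* x y}"
  shows "net_flux W v' \<le> net_flux W v"
  unfolding net_flux_eq_sum
proof (rule sum_mono)
  fix e assume e: "e \<in> E"
  have closed: "y \<in> W" if "x \<in> W" "residual l u v x y" for x y
    using that W by (auto intro: rtranclp.rtrancl_into_rtrancl)
  have "u e \<le> v e" if "src e \<in> W" "tgt e \<notin> W"
    using closed[of "src e" "tgt e"] that e unfolding residual_def by force
  moreover have "v e \<le> l e" if "tgt e \<in> W" "src e \<notin> W"
    using closed[of "tgt e" "src e"] that e unfolding residual_def by force
  ultimately show "(of_bool (src e \<in> W) - of_bool (tgt e \<in> W)) * v' e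
      \<le> (of_bool (src e \<in> W) - of_bool (tgt e \<in> W)) * v e"
    using v[rule_format, OF e] v'[rule_format, OF e]
    by (cases "src e \<in> W"; cases "tgt e \<in> W") auto
qed

lemma bounded_flow_residual_cut:
  assumes v: "bounded_flow l u T v" and v': "bounded_flow l u T v'" and X: "finite X" "X \<subseteq> T"
    and no_path: "\<forall>x\<in>X. \<forall>y\<in>T - X. \<not> (residual l u v)\<^sup>*\<^sup>* x y"
  shows "(\<Sum>x\<in>X. divergence v' x) \<le> (\<Sum>x\<in>X. divergence v x)"
proof -
  define W where "W = {y. \<exists>x\<in>X. (residual l u v)\<^sup>*\<^sup>* x y}"
  have W: "X \<subseteq> W" "W \<subseteq> X \<union> V" "W - X \<subseteq> V - T"
    using residual_rtranclp_in_V no_path X unfolding W_def by fastforce+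
  have "net_flux W f = (\<Sum>x\<in>X. divergence f x)" if "bounded_flow l u T f" for f
    using that W X unfolding bounded_flow_def
    by (intro net_flux_eq_sum_divergence_if_conserved) auto
  moreover have "net_flux W v' \<le> net_flux W v"
    using v v' unfolding bounded_flow_def by (intro net_flux_le_residual_closure[OF _ _ W_def]) auto
  ultimately show ?thesis
    using v v' by simp
qed

subsection \<open>Three terminals\<close>

lemma S_doubleton_eq_complement:
  assumes T: "T = {a, b, d}" "distinct [a, b, d]" "T \<subseteq> V"
  shows "S c T {a, b} = S c T {d}"
proof -
  have reverse: "net_flux {a, b} v = net_flux {d} (\<lambda>e. - v e)" if "flow c T v" for v
    using flow_divergence_three_terminals[OF that T] T(2)
    by (simp add: net_flux_doubleton net_flux_singleton divergence_minus)
  have "{net_flux {a, b} v | v. flow c T v} = {net_flux {d} v | v. flow c T v}"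
  proof (intro set_eqI iffI)
    fix y assume "y \<in> {net_flux {a, b} v | v. flow c T v}"
    then show "y \<in> {net_flux {d} v | v. flow c T v}"
      using reverse flow_uminus by blast
  next
    fix y assume "y \<in> {net_flux {d} v | v. flow c T v}"
    then obtain v where v: "flow c T v" "y = net_flux {d} v"
      by blast
    then have "y = net_flux {a, b} (\<lambda>e. - v e)"
      using reverse[OF flow_uminus[OF v(1)]] by simp
    then show "y \<in> {net_flux {a, b} v | v. flow c T v}"
      using flow_uminus[OF v(1)] by blast
  qed
  then show ?thesis
    unfolding S_net_def by simp
qed

lemma mutual_info_three_terminals:
  assumes "T = {a, b, d}" "distinct [a, b, d]" "T \<subseteq> V"
  shows "I c T a b = S c T {a} + S c T {b} - S c T {d}"
  unfolding mutual_info_def using S_doubleton_eq_complement[OF assms] by simp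

lemma S_singletons_eq_half_mutual_infos:
  assumes T: "T = {a, b, d}" "distinct [a, b, d]" "T \<subseteq> V"
  shows "S c T {a} = I c T a b / 2 + I c T a d / 2" "S c T {b} = I c T a b / 2 + I c T b d / 2"
    "S c T {d} = I c T a d / 2 + I c T b d / 2"
proof -
  have T': "T = {a, d, b}" "distinct [a, d, b]" "T = {b, d, a}" "distinct [b, d, a]"
    using T by auto
  show "S c T {a} = I c T a b / 2 + I c T a d / 2" "S c T {b} = I c T a b / 2 + I c T b d / 2"
    "S c T {d} = I c T a d / 2 + I c T b d / 2"
    using mutual_info_three_terminals[OF T, of c] mutual_info_three_terminals[OF T'(1,2) T(3), of c]
      mutual_info_three_terminals[OF T'(3,4) T(3), of c] by linarith+
qed

lemma mutual_info_nonneg: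
  assumes "\<forall>e\<in>E. 0 \<le> c e" "a \<noteq> b"
  shows "0 \<le> I c T a b"
proof -
  obtain v where "flow c T v" "\<forall>v'. flow c T v' \<longrightarrow> net_flux {a, b} v' \<le> net_flux {a, b} v"
    using S_maximizer_exists[OF assms(1)] by blast
  then have "S c T {a, b} = divergence v a + divergence v b"
    using S_eq_maximum assms(2) by (simp add: net_flux_doubleton)
  moreover have "divergence v a \<le> S c T {a}" "divergence v b \<le> S c T {b}"
    using net_flux_le_S[OF assms(1) \<open>flow c T v\<close>] by (metis net_flux_singleton)+
  ultimately show ?thesis
    unfolding mutual_info_def by simp
qed

text \<open>Take g maximizing the flux out of a minus the flux out of d: each such path would
  augment it.\<close>

lemma flow_without_descending_residual_paths:
  assumes c: "\<forall>e\<in>E. 0 \<le> c e" and T: "T = {a, b, d}" "distinct [a, b, d]"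
  obtains g where "bounded_flow (\<lambda>e. - c e) c T g"
    "\<And>x y. (x, y) \<in> {(a, d), (a, b), (b, d)} \<Longrightarrow> \<not> (residual (\<lambda>e. - c e) c g)\<^sup>*\<^sup>* x y"
proof -
  have objective: "(\<Sum>e\<in>E. ((of_bool (src e = a) - of_bool (tgt e = a)) -
      (of_bool (src e = d) - of_bool (tgt e = d))) * v e) = divergence v a - divergence v d" for v
    by (simp add: divergence_eq_sum left_diff_distrib sum_subtractf)
  obtain g where g: "bounded_flow (\<lambda>e. - c e) c T g" and g_max:
    "\<forall>v. bounded_flow (\<lambda>e. - c e) c T v \<longrightarrow>
      divergence v a - divergence v d \<le> divergence g a - divergence g d"
    using bounded_flow_linear_max_exists[of "\<lambda>e. - c e" c T "\<lambda>e. (of_bool (src e = a) - of_bool (tgt e = a)) -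
        (of_bool (src e = d) - of_bool (tgt e = d))"] c
    unfolding objective by auto
  have "\<not> (residual (\<lambda>e. - c e) c g)\<^sup>*\<^sup>* x y" if "(x, y) \<in> {(a, d), (a, b), (b, d)}" for x y
  proof
    assume path: "(residual (\<lambda>e. - c e) c g)\<^sup>*\<^sup>* x y"
    have "x \<in> T" "y \<in> T"
      using that T(1) by auto
    then obtain \<epsilon> g' where \<epsilon>: "\<epsilon> > 0" and g': "bounded_flow (\<lambda>e. - c e) c T g'"
      and div_g': "\<forall>z. divergence g' z = divergence g z + \<epsilon> * (of_bool (z = x) - of_bool (z = y))"
      using residual_path_augment[OF g _ _ path] by blast
    have "divergence g' a - divergence g' d > divergence g a - divergence g d"
      using div_g'[rule_format, of a] div_g'[rule_format, of d] \<epsilon> that T(2) by auto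
    then show False
      using g_max g' by fastforce
  qed
  then show ?thesis
    using g that by blast
qed

lemma flow_saturating_source_and_sink:
  assumes c: "\<forall>e\<in>E. 0 \<le> c e" and T: "T = {a, b, d}" "distinct [a, b, d]" "T \<subseteq> V"
  shows "\<exists>g. flow c T g \<and> divergence g a = S c T {a} \<and> divergence g d = - S c T {d}"
proof -
  obtain g where g: "bounded_flow (\<lambda>e. - c e) c T g"
    and no_path: "\<And>x y. (x, y) \<in> {(a, d), (a, b), (b, d)} \<Longrightarrow> \<not> (residual (\<lambda>e. - c e) c g)\<^sup>*\<^sup>* x y"
    using flow_without_descending_residual_paths[OF c T(1,2)] by blast
  have g_flow: "flow c T g"
    using g unfolding is_flow_iff_bounded_flow .
  have out_a: "divergence v a \<le> divergence g a" if "flow c T v" for v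
  proof -
    have "\<forall>x\<in>{a}. \<forall>y\<in>T - {a}. \<not> (residual (\<lambda>e. - c e) c g)\<^sup>*\<^sup>* x y"
      using no_path T by auto
    then show ?thesis
      using bounded_flow_residual_cut[OF g, of v "{a}"] that T(1)
      unfolding is_flow_iff_bounded_flow by simp
  qed
  have out_ab: "divergence v a + divergence v b \<le> divergence g a + divergence g b" if "flow c T v" for v
  proof -
    have "\<forall>x\<in>{a, b}. \<forall>y\<in>T - {a, b}. \<not> (residual (\<lambda>e. - c e) c g)\<^sup>*\<^sup>* x y"
      using no_path T by auto
    then show ?thesis
      using bounded_flow_residual_cut[OF g, of v "{a, b}"] that T
      unfolding is_flow_iff_bounded_flow by simp
  qed
  have in_d: "divergence v d \<le> divergence (\<lambda>e. - g e) d" if "flow c T v" for v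
    using out_ab[OF flow_uminus[OF that]] flow_divergence_three_terminals[OF that T]
      flow_divergence_three_terminals[OF g_flow T]
    by (simp add: divergence_minus)
  have "S c T {a} = divergence g a"
    using S_eq_maximum[OF g_flow] out_a by (simp add: net_flux_singleton)
  moreover have "S c T {d} = - divergence g d"
    using S_eq_maximum[OF flow_uminus[OF g_flow]] in_d by (simp add: net_flux_singleton divergence_minus)
  ultimately show ?thesis
    using g_flow by auto
qed

text \<open>Maximizing the flux out of a over flows that follow w edgewise in sign and are bounded
  by it in size, the residual closure W of a misses b; its cut capacity bounds the flux of w
  through W, which is that out of a, or out of a and d.\<close>

lemma conformal_subflow_exists:
  assumes T: "T = {a, b, d}" "distinct [a, b, d]" and w: "\<forall>x\<in>V - T. divergence w x = 0"
  shows "\<exists>z. bounded_flow (\<lambda>e. min 0 (w e)) (\<lambda>e. max 0 (w e)) {a, b} z \<and>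
    min (divergence w a) (divergence w a + divergence w d) \<le> divergence z a"
proof -
  let ?l = "\<lambda>e. min 0 (w e)" and ?u = "\<lambda>e. max 0 (w e)"
  obtain z where z: "bounded_flow ?l ?u {a, b} z"
    and z_max: "\<forall>z'. bounded_flow ?l ?u {a, b} z' \<longrightarrow> divergence z' a \<le> divergence z a"
    using bounded_flow_linear_max_exists[of ?l ?u "{a, b}" "\<lambda>e. of_bool (src e = a) - of_bool (tgt e = a)"]
    unfolding divergence_eq_sum[symmetric] by auto
  let ?R = "residual ?l ?u z"
  have no_path: "\<not> ?R\<^sup>*\<^sup>* a b"
  proof
    assume path: "?R\<^sup>*\<^sup>* a b"
    obtain \<epsilon> z' where "\<epsilon> > 0" "bounded_flow ?l ?u {a, b} z'"
      "\<forall>x. divergence z' x = divergence z x + \<epsilon> * (of_bool (x = a) - of_bool (x = b))"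
      using residual_path_augment[OF z _ _ path] by blast
    then show False
      using z_max T(2) by fastforce
  qed
  define W where "W = {y. \<exists>x\<in>{a}. ?R\<^sup>*\<^sup>* x y}"
  have W: "{a} \<subseteq> W" "W \<subseteq> {a} \<union> V" "b \<notin> W"
    using residual_rtranclp_in_V no_path unfolding W_def by fastforce+
  have "net_flux W w \<le> net_flux W z"
    using z unfolding bounded_flow_def by (intro net_flux_le_residual_closure[OF _ _ W_def]) auto
  moreover have "net_flux W z = divergence z a"
    using net_flux_eq_sum_divergence_if_conserved[of "{a}" W z] W z unfolding bounded_flow_def by auto
  moreover have "min (divergence w a) (divergence w a + divergence w d) \<le> net_flux W w"
  proof (cases "d \<in> W")
    case True
    then have "net_flux W w = (\<Sum>x\<in>{a, d}. divergence w x)"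
      using W T w by (intro net_flux_eq_sum_divergence_if_conserved) auto
    then show ?thesis
      using T(2) by simp
  next
    case False
    then have "net_flux W w = (\<Sum>x\<in>{a}. divergence w x)"
      using W T w by (intro net_flux_eq_sum_divergence_if_conserved) auto
    then show ?thesis
      by simp
  qed
  ultimately show ?thesis
    using z by auto
qed

lemma conformal_split:
  assumes T: "T = {p, q, r}" "distinct [p, q, r]" "T \<subseteq> V"
    and w: "\<forall>x\<in>V - T. divergence w x = 0" "divergence w q = - \<alpha>" "divergence w r = - \<beta>"
    and "0 \<le> \<alpha>" "0 \<le> \<beta>"
  shows "\<exists>w1. (\<forall>e\<in>E. \<bar>w1 e\<bar> + \<bar>w e - w1 e\<bar> = \<bar>w e\<bar>) \<and>
    (\<forall>x\<in>V - {p, q}. divergence w1 x = 0) \<and> divergence w1 p = \<alpha> \<and> divergence w1 q = - \<alpha> \<and>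
    (\<forall>x\<in>V - {p, r}. divergence (\<lambda>e. w e - w1 e) x = 0) \<and>
    divergence (\<lambda>e. w e - w1 e) p = \<beta> \<and> divergence (\<lambda>e. w e - w1 e) r = - \<beta>"
proof -
  have w_p: "divergence w p = \<alpha> + \<beta>"
    using divergence_sum_boundary[OF T(3) w(1)] w(2,3) T(1,2) by simp
  obtain z where z: "bounded_flow (\<lambda>e. min 0 (w e)) (\<lambda>e. max 0 (w e)) {p, q} z"
    and z_p: "\<alpha> \<le> divergence z p"
    using conformal_subflow_exists[OF T(1,2) w(1)] w_p w(3) \<open>0 \<le> \<beta>\<close> by fastforce
  have z_q: "divergence z q = - divergence z p"
    using divergence_sum_boundary[of "{p, q}" z] z T unfolding bounded_flow_def by auto
  \<comment> \<open>If the divergence of z at p vanishes then so does \<alpha>, and t = \<alpha> / 0 = 0 still works.\<close>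
  define t where "t = \<alpha> / divergence z p"
  have t: "0 \<le> t" "t \<le> 1" "t * divergence z p = \<alpha>"
    using z_p \<open>0 \<le> \<alpha>\<close> unfolding t_def by (auto simp: divide_le_eq_1)
  have w1: "\<forall>x\<in>V - {p, q}. divergence (\<lambda>e. t * z e) x = 0"
    using z unfolding bounded_flow_def by (simp add: divergence_scale)
  moreover have "\<forall>e\<in>E. \<bar>t * z e\<bar> + \<bar>w e - t * z e\<bar> = \<bar>w e\<bar>"
    using z t abs_scaled_part_add_abs_rest unfolding bounded_flow_def by auto
  moreover have "\<forall>x\<in>V - {p, r}. divergence (\<lambda>e. w e - t * z e) x = 0"
    using w(1,2) w1 t z_q T by (auto simp: divergence_diff divergence_scale)
  moreover have "divergence (\<lambda>e. t * z e) r = 0"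
    using w1 T by auto
  ultimately show ?thesis
    using t z_q w_p w(3) by (intro exI[of _ "\<lambda>e. t * z e"]) (simp add: divergence_diff divergence_scale)
qed

lemma S_superadditive:
  assumes "\<forall>e\<in>E. 0 \<le> k1 e" "\<forall>e\<in>E. 0 \<le> k2 e" "\<forall>e\<in>E. k1 e + k2 e \<le> c e"
  shows "S k1 T Y + S k2 T Y \<le> S c T Y"
proof -
  obtain v1 where v1: "flow k1 T v1" "\<forall>v. flow k1 T v \<longrightarrow> net_flux Y v \<le> net_flux Y v1"
    using S_maximizer_exists[OF assms(1)] by blast
  obtain v2 where v2: "flow k2 T v2" "\<forall>v. flow k2 T v \<longrightarrow> net_flux Y v \<le> net_flux Y v2"
    using S_maximizer_exists[OF assms(2)] by blast
  have "flow c T (\<lambda>e. v1 e + v2 e)"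
  proof (rule flowI)
    show "\<forall>e\<in>E. \<bar>v1 e + v2 e\<bar> \<le> c e"
      using flow_abs_le[OF v1(1)] flow_abs_le[OF v2(1)] assms(3) by (smt (verit, best))
    show "\<forall>x\<in>V - T. divergence (\<lambda>e. v1 e + v2 e) x = 0"
      using flow_divergence_zero[OF v1(1)] flow_divergence_zero[OF v2(1)] by (simp add: divergence_add)
  qed
  moreover have "\<forall>e\<in>E. 0 \<le> c e"
    using assms by force
  ultimately have "net_flux Y v1 + net_flux Y v2 \<le> S c T Y"
    using net_flux_le_S by (metis net_flux_add)
  then show ?thesis
    using S_eq_maximum v1 v2 by simp
qed

lemma pos_connected_imp_residual_path:
  assumes "pos_connected E src tgt k x y"
  shows "(residual (\<lambda>e. - k e) k (\<lambda>_. 0))\<^sup>*\<^sup>* x y"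
proof -
  have "pos_adj E src tgt k a b \<Longrightarrow> residual (\<lambda>e. - k e) k (\<lambda>_. 0) a b" for a b
    unfolding pos_adj_def residual_def by auto
  then show ?thesis
    using assms unfolding pos_connected_def by (metis mono_rtranclp)
qed

lemma pos_connected_sym: "pos_connected E src tgt k x y \<Longrightarrow> pos_connected E src tgt k y x"
  unfolding pos_connected_def
  by (rule sympD[OF symp_rtranclp]) (auto simp: symp_def pos_adj_def)

lemma S_zero_imp_not_pos_connected:
  assumes k: "\<forall>e\<in>E. 0 \<le> k e" and xy: "x \<in> T" "y \<in> T" "x \<noteq> y" and S_x: "S k T {x} = 0"
  shows "\<not> pos_connected E src tgt k x y"
proof
  assume "pos_connected E src tgt k x y"
  then obtain \<epsilon> g where "\<epsilon> > 0" "flow k T g"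
    "\<forall>z. divergence g z = divergence (\<lambda>_. 0) z + \<epsilon> * (of_bool (z = x) - of_bool (z = y))"
    using residual_path_augment[OF flow_zero[OF k, unfolded is_flow_iff_bounded_flow] xy(1,2)
        pos_connected_imp_residual_path]
    unfolding is_flow_iff_bounded_flow by blast
  moreover have "net_flux {x} g \<le> S k T {x}"
    using net_flux_le_S[OF k \<open>flow k T g\<close>] .
  ultimately show False
    using S_x xy(3) by (simp add: net_flux_singleton divergence_zero)
qed

lemma source_flow_and_transfer_flow:
  assumes c: "\<forall>e\<in>E. 0 \<le> c e" and T: "T = {p, q, r}" "distinct [p, q, r]" "T \<subseteq> V"
  shows "\<exists>w y. (\<forall>e\<in>E. \<bar>w e\<bar> + \<bar>y e\<bar> \<le> c e) \<and> (\<forall>x\<in>V - T. divergence w x = 0 \<and> divergence y x = 0) \<and>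
    divergence w q = - (I c T p q / 2) \<and> divergence w r = - (I c T p r / 2) \<and>
    divergence y q = I c T q r / 2 \<and> divergence y r = - (I c T q r / 2)"
proof -
  have T': "T = {p, r, q}" "distinct [p, r, q]" "T = {q, r, p}" "distinct [q, r, p]"
    using T by auto
  obtain g where g: "flow c T g" "divergence g p = S c T {p}" "divergence g r = - S c T {r}"
    using flow_saturating_source_and_sink[OF c T] by blast
  obtain h where h: "flow c T h" "divergence h p = S c T {p}" "divergence h q = - S c T {q}"
    using flow_saturating_source_and_sink[OF c T'(1,2) T(3)] by blast
  have g_q: "divergence g q = S c T {r} - S c T {p}"
    using flow_divergence_three_terminals[OF g(1) T] g(2,3) by simp
  have h_r: "divergence h r = S c T {q} - S c T {p}"
    using flow_divergence_three_terminals[OF h(1) T] h(2,3) by simp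
  have I: "I c T p q = S c T {p} + S c T {q} - S c T {r}"
    "I c T p r = S c T {p} + S c T {r} - S c T {q}"
    "I c T q r = S c T {q} + S c T {r} - S c T {p}"
    using mutual_info_three_terminals[OF T] mutual_info_three_terminals[OF T'(1,2) T(3)]
      mutual_info_three_terminals[OF T'(3,4) T(3)] by simp_all
  let ?w = "\<lambda>e. (g e + h e) / 2" and ?y = "\<lambda>e. (g e - h e) / 2"
  have div: "divergence ?w x = (divergence g x + divergence h x) / 2"
    "divergence ?y x = (divergence g x - divergence h x) / 2" for x
    using divergence_scale[of "1 / 2"] by (simp_all add: divergence_add divergence_diff)
  have "\<forall>e\<in>E. \<bar>?w e\<bar> + \<bar>?y e\<bar> \<le> c e"
    using abs_half_sum_add_abs_half_diff flow_abs_le[OF g(1)] flow_abs_le[OF h(1)]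
    by (metis max.boundedI)
  moreover have "\<forall>x\<in>V - T. divergence ?w x = 0 \<and> divergence ?y x = 0"
    using flow_divergence_zero[OF g(1)] flow_divergence_zero[OF h(1)] by (simp add: div)
  moreover have "divergence ?w q = - (I c T p q / 2)" "divergence ?w r = - (I c T p r / 2)"
    "divergence ?y q = I c T q r / 2" "divergence ?y r = - (I c T q r / 2)"
    unfolding div I using g(2,3) h(2,3) g_q h_r by (simp_all add: field_simps)
  ultimately show ?thesis
    by (intro exI[of _ ?w] exI[of _ ?y]) blast
qed

definition carries :: "('e \<Rightarrow> real) \<Rightarrow> 'v set \<Rightarrow> 'v \<Rightarrow> 'v \<Rightarrow> real \<Rightarrow> bool" where
  "carries k T x y m \<longleftrightarrow> (\<exists>f. flow k T f \<and> divergence f x = m \<and> divergence f y = - m)"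

lemma carries_le_S:
  assumes "\<forall>e\<in>E. 0 \<le> k e" "carries k T x y m"
  shows "m \<le> S k T {x}" "m \<le> S k T {y}"
proof -
  obtain f where f: "flow k T f" "divergence f x = m" "divergence f y = - m"
    using assms(2) unfolding carries_def by blast
  show "m \<le> S k T {x}"
    using net_flux_le_S[OF assms(1) f(1), of "{x}"] f(2) by (simp add: net_flux_singleton)
  show "m \<le> S k T {y}"
    using net_flux_le_S[OF assms(1) flow_uminus[OF f(1)], of "{y}"] f(3)
    by (simp add: net_flux_singleton divergence_minus)
qed

lemma three_terminal_flow_split:
  assumes c: "\<forall>e\<in>E. 0 \<le> c e" and T: "T = {p, q, r}" "distinct [p, q, r]" "T \<subseteq> V"
  shows "\<exists>k_pq k_pr k_qr. (\<forall>e\<in>E. 0 \<le> k_pq e \<and> 0 \<le> k_pr e \<and> 0 \<le> k_qr e \<and> k_pq e + k_pr e + k_qr e = c e) \<and>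
    carries k_pq T p q (I c T p q / 2) \<and> carries k_pr T p r (I c T p r / 2) \<and>
    carries k_qr T q r (I c T q r / 2)"
proof -
  obtain w y where wy: "\<forall>e\<in>E. \<bar>w e\<bar> + \<bar>y e\<bar> \<le> c e"
    and conserved: "\<forall>x\<in>V - T. divergence w x = 0 \<and> divergence y x = 0"
    and w: "divergence w q = - (I c T p q / 2)" "divergence w r = - (I c T p r / 2)"
    and y: "divergence y q = I c T q r / 2" "divergence y r = - (I c T q r / 2)"
    using source_flow_and_transfer_flow[OF c T] by blast
  have w_conserved: "\<forall>x\<in>V - T. divergence w x = 0"
    using conserved by blast
  have "0 \<le> I c T p q / 2" "0 \<le> I c T p r / 2"
    using mutual_info_nonneg[OF c] T(2) by simp_all
  then obtain w1 where w1: "\<forall>e\<in>E. \<bar>w1 e\<bar> + \<bar>w e - w1 e\<bar> = \<bar>w e\<bar>"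
    "\<forall>x\<in>V - {p, q}. divergence w1 x = 0"
    "divergence w1 p = I c T p q / 2" "divergence w1 q = - (I c T p q / 2)"
    and w2: "\<forall>x\<in>V - {p, r}. divergence (\<lambda>e. w e - w1 e) x = 0"
    "divergence (\<lambda>e. w e - w1 e) p = I c T p r / 2" "divergence (\<lambda>e. w e - w1 e) r = - (I c T p r / 2)"
    using conformal_split[OF T w_conserved w] by blast
  let ?k_pq = "\<lambda>e. \<bar>w1 e\<bar> + (c e - (\<bar>w e\<bar> + \<bar>y e\<bar>))"
  let ?k_pr = "\<lambda>e. \<bar>w e - w1 e\<bar>" and ?k_qr = "\<lambda>e. \<bar>y e\<bar>"
  have "carries ?k_pq T p q (I c T p q / 2)"
    unfolding carries_def using wy w1(2-4) T by (intro exI[of _ w1] conjI flowI) auto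
  moreover have "carries ?k_pr T p r (I c T p r / 2)"
    unfolding carries_def using w2 T by (intro exI[of _ "\<lambda>e. w e - w1 e"] conjI flowI) auto
  moreover have "carries ?k_qr T q r (I c T q r / 2)"
    unfolding carries_def using conserved y by (intro exI[of _ y] conjI flowI) auto
  moreover have "\<forall>e\<in>E. 0 \<le> ?k_pq e \<and> 0 \<le> ?k_pr e \<and> 0 \<le> ?k_qr e \<and> ?k_pq e + ?k_pr e + ?k_qr e = c e"
  proof
    fix e assume "e \<in> E"
    then show "0 \<le> ?k_pq e \<and> 0 \<le> ?k_pr e \<and> 0 \<le> ?k_qr e \<and> ?k_pq e + ?k_pr e + ?k_qr e = c e"
      using wy w1(1) abs_ge_zero[of "w1 e"] abs_ge_zero[of "w e - w1 e"] abs_ge_zero[of "y e"]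
      by fastforce
  qed
  ultimately show ?thesis
    by (intro exI[of _ ?k_pq] exI[of _ ?k_pr] exI[of _ ?k_qr]) blast
qed

definition pair_subnetwork ::
  "('e \<Rightarrow> real) \<Rightarrow> 'v set \<Rightarrow> ('e \<Rightarrow> real) \<Rightarrow> 'v \<Rightarrow> 'v \<Rightarrow> 'v \<Rightarrow> bool" where
  "pair_subnetwork c T k a b d \<longleftrightarrow> (\<forall>e\<in>E. 0 \<le> k e) \<and>
     S k T {a} = I c T a b / 2 \<and> S k T {b} = I c T a b / 2 \<and> S k T {d} = 0"

lemma three_terminal_decomposition:
  assumes c: "\<forall>e\<in>E. 0 \<le> c e" and T: "T = {a, b, d}" "distinct [a, b, d]" "T \<subseteq> V"
  shows "\<exists>k_ab k_ad k_bd. (\<forall>e\<in>E. k_ab e + k_ad e + k_bd e = c e) \<and>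
    pair_subnetwork c T k_ab a b d \<and> pair_subnetwork c T k_ad a d b \<and> pair_subnetwork c T k_bd b d a \<and>
    (\<forall>x\<in>T. S k_ab T {x} + S k_ad T {x} + S k_bd T {x} = S c T {x})"
proof -
  obtain k_ab k_ad k_bd where k: "\<forall>e\<in>E. 0 \<le> k_ab e \<and> 0 \<le> k_ad e \<and> 0 \<le> k_bd e \<and> k_ab e + k_ad e + k_bd e = c e"
    and carries: "carries k_ab T a b (I c T a b / 2)" "carries k_ad T a d (I c T a d / 2)"
      "carries k_bd T b d (I c T b d / 2)"
    using three_terminal_flow_split[OF c T] by blast
  have nonneg: "\<forall>e\<in>E. 0 \<le> k_ab e" "\<forall>e\<in>E. 0 \<le> k_ad e" "\<forall>e\<in>E. 0 \<le> k_bd e"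
    using k by auto
  have lower: "I c T a b / 2 \<le> S k_ab T {a}" "I c T a b / 2 \<le> S k_ab T {b}"
    "I c T a d / 2 \<le> S k_ad T {a}" "I c T a d / 2 \<le> S k_ad T {d}"
    "I c T b d / 2 \<le> S k_bd T {b}" "I c T b d / 2 \<le> S k_bd T {d}"
    using carries_le_S nonneg carries by blast+
  have upper: "S k_ab T {x} + S k_ad T {x} + S k_bd T {x} \<le> S c T {x}" for x
  proof -
    have "S k_ab T {x} + S k_ad T {x} \<le> S (\<lambda>e. k_ab e + k_ad e) T {x}"
      using nonneg by (intro S_superadditive) auto
    also have "\<dots> + S k_bd T {x} \<le> S c T {x}"
      using k by (intro S_superadditive) auto
    finally show ?thesis
      by simp
  qed
  have S_c: "S c T {a} = I c T a b / 2 + I c T a d / 2" "S c T {b} = I c T a b / 2 + I c T b d / 2"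
    "S c T {d} = I c T a d / 2 + I c T b d / 2"
    using S_singletons_eq_half_mutual_infos[OF T] .
  have S_nonneg: "0 \<le> S k_ab T {x}" "0 \<le> S k_ad T {x}" "0 \<le> S k_bd T {x}" for x
    using S_singleton_nonneg nonneg by blast+
  note bounds = lower upper[of a] upper[of b] upper[of d] S_c
    S_nonneg[of a] S_nonneg[of b] S_nonneg[of d]
  have S_ab: "S k_ab T {a} = I c T a b / 2" "S k_ab T {b} = I c T a b / 2" "S k_ab T {d} = 0"
    and S_ad: "S k_ad T {a} = I c T a d / 2" "S k_ad T {d} = I c T a d / 2" "S k_ad T {b} = 0"
    and S_bd: "S k_bd T {b} = I c T b d / 2" "S k_bd T {d} = I c T b d / 2" "S k_bd T {a} = 0"
    using bounds by linarith+
  then have "pair_subnetwork c T k_ab a b d" "pair_subnetwork c T k_ad a d b"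
    "pair_subnetwork c T k_bd b d a"
    unfolding pair_subnetwork_def using nonneg by simp_all
  moreover have "\<forall>x\<in>T. S k_ab T {x} + S k_ad T {x} + S k_bd T {x} = S c T {x}"
    using S_ab S_ad S_bd S_c T(1) by auto
  ultimately show ?thesis
    using k by blast
qed

lemma pair_subnetwork_mutual_info:
  assumes "pair_subnetwork c T k a b d" "T = {a, b, d}" "distinct [a, b, d]" "T \<subseteq> V"
  shows "I k T a b = I c T a b"
  using assms(1) mutual_info_three_terminals[OF assms(2-4), of k]
  unfolding pair_subnetwork_def by simp

lemma pair_subnetwork_connects_only_pair:
  assumes k: "pair_subnetwork c T k a b d" and T: "T = {a, b, d}"
    and xy: "x \<in> T" "y \<in> T" "x \<noteq> y" and conn: "pos_connected E src tgt k x y"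
  shows "{x, y} = {a, b}"
proof -
  have "\<forall>e\<in>E. 0 \<le> k e" "S k T {d} = 0"
    using k unfolding pair_subnetwork_def by auto
  then have "x \<noteq> d" "y \<noteq> d"
    using S_zero_imp_not_pos_connected xy conn pos_connected_sym by metis+
  then show ?thesis
    using xy T by auto
qed

lemma pair_subnetwork_indexed:
  fixes A :: "nat \<Rightarrow> 'v"
  assumes T: "T = {A 1, A 2, A 3}" "T \<subseteq> V" and inj: "inj_on A {1, 2, 3}"
    and ijl: "{i, j, l} = {1, 2, 3}" "distinct [i, j, l]"
    and k: "pair_subnetwork c T k (A i) (A j) (A l)"
  shows "(\<forall>e\<in>E. 0 \<le> k e) \<and>
    S k T {A i} = I c T (A i) (A j) / 2 \<and> S k T {A j} = I c T (A i) (A j) / 2 \<and>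
    (\<forall>m\<in>{1, 2, 3}. m \<noteq> i \<and> m \<noteq> j \<longrightarrow> S k T {A m} = 0) \<and>
    (\<forall>p\<in>{1, 2, 3}. \<forall>q\<in>{1, 2, 3}. p \<noteq> q \<and> pos_connected E src tgt k (A p) (A q) \<longrightarrow> {p, q} = {i, j}) \<and>
    I k T (A i) (A j) = I c T (A i) (A j)"
proof -
  have "A ` {i, j, l} = A ` {1, 2, 3}"
    using ijl(1) by simp
  then have T_ijl: "T = {A i, A j, A l}"
    using T(1) by simp
  have dist: "distinct [A i, A j, A l]"
    using distinct_map[of A "[i, j, l]"] ijl inj by simp
  have ij: "i \<in> {1, 2, 3}" "j \<in> {1, 2, 3}"
    using ijl(1) by blast+
  have "\<forall>m\<in>{1, 2, 3}. m \<noteq> i \<and> m \<noteq> j \<longrightarrow> S k T {A m} = 0"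
  proof (intro ballI impI)
    fix m :: nat assume "m \<in> {1, 2, 3}" "m \<noteq> i \<and> m \<noteq> j"
    then have "m = l"
      using ijl(1) by blast
    then show "S k T {A m} = 0"
      using k unfolding pair_subnetwork_def by simp
  qed
  moreover have "\<forall>p\<in>{1, 2, 3}. \<forall>q\<in>{1, 2, 3}. p \<noteq> q \<and> pos_connected E src tgt k (A p) (A q) \<longrightarrow> {p, q} = {i, j}"
  proof (intro ballI impI)
    fix p q :: nat
    assume pq: "p \<in> {1, 2, 3}" "q \<in> {1, 2, 3}" "p \<noteq> q \<and> pos_connected E src tgt k (A p) (A q)"
    then have "A p \<noteq> A q" "A p \<in> T" "A q \<in> T"
      using inj T(1) by (auto dest: inj_onD)
    then have "A ` {p, q} = A ` {i, j}"
      using pair_subnetwork_connects_only_pair[OF k T_ijl] pq(3) by simp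
    then show "{p, q} = {i, j}"
      using inj_on_image_eq_iff[OF inj, of "{p, q}" "{i, j}"] pq(1,2) ij by simp
  qed
  moreover have "I k T (A i) (A j) = I c T (A i) (A j)"
    using pair_subnetwork_mutual_info[OF k T_ijl dist] T(2) T_ijl by simp
  ultimately show ?thesis
    using k unfolding pair_subnetwork_def by blast
qed

end

theorem theorem4:
  fixes V :: "'v set" and E :: "'e set" and src tgt :: "'e \<Rightarrow> 'v"
    and c :: "'e \<Rightarrow> real" and A :: "nat \<Rightarrow> 'v"
  assumes net: "network V E src tgt c {A 1, A 2, A 3}"
    and distinct: "A 1 \<noteq> A 2" "A 1 \<noteq> A 3" "A 2 \<noteq> A 3"
  shows "\<exists>cc :: nat \<Rightarrow> nat \<Rightarrow> 'e \<Rightarrow> real.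
    (\<forall>i j. 1 \<le> i \<and> i < j \<and> j \<le> 3 \<longrightarrow> (\<forall>e\<in>E. 0 \<le> cc i j e)) \<and>
    (\<forall>e\<in>E. cc 1 2 e + cc 1 3 e + cc 2 3 e = c e) \<and>
    (\<forall>i j. 1 \<le> i \<and> i < j \<and> j \<le> 3 \<longrightarrow>
       S_net V E src tgt (cc i j) {A 1, A 2, A 3} {A i} = mutual_info V E src tgt c {A 1, A 2, A 3} (A i) (A j) / 2 \<and>
       S_net V E src tgt (cc i j) {A 1, A 2, A 3} {A j} = mutual_info V E src tgt c {A 1, A 2, A 3} (A i) (A j) / 2 \<and>
       (\<forall>k\<in>{1,2,3}. k \<noteq> i \<and> k \<noteq> j \<longrightarrow> S_net V E src tgt (cc i j) {A 1, A 2, A 3} {A k} = 0) \<and>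
       (\<forall>p\<in>{1,2,3}. \<forall>q\<in>{1,2,3}. p \<noteq> q \<and> pos_connected E src tgt (cc i j) (A p) (A q)
           \<longrightarrow> {p, q} = {i, j}) \<and>
       mutual_info V E src tgt (cc i j) {A 1, A 2, A 3} (A i) (A j) = mutual_info V E src tgt c {A 1, A 2, A 3} (A i) (A j)) \<and>
    (\<forall>k\<in>{1,2,3}. S_net V E src tgt (cc 1 2) {A 1, A 2, A 3} {A k} + S_net V E src tgt (cc 1 3) {A 1, A 2, A 3} {A k}
        + S_net V E src tgt (cc 2 3) {A 1, A 2, A 3} {A k} = S_net V E src tgt c {A 1, A 2, A 3} {A k})"
proof -
  let ?T = "{A 1, A 2, A 3}"
  interpret finite_network V E src tgt
    using net unfolding network_def by unfold_locales auto
  have c: "\<forall>e\<in>E. 0 \<le> c e" and TV: "?T \<subseteq> V" and inj: "inj_on A {1, 2, 3}"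
    using net distinct unfolding network_def inj_on_def by auto
  obtain k12 k13 k23 where sum: "\<forall>e\<in>E. k12 e + k13 e + k23 e = c e"
    and parts: "pair_subnetwork c ?T k12 (A 1) (A 2) (A 3)" "pair_subnetwork c ?T k13 (A 1) (A 3) (A 2)"
      "pair_subnetwork c ?T k23 (A 2) (A 3) (A 1)"
    and S_sum: "\<forall>x\<in>?T. S k12 ?T {x} + S k13 ?T {x} + S k23 ?T {x} = S c ?T {x}"
    using three_terminal_decomposition[OF c refl _ TV] distinct by auto
  define cc :: "nat \<Rightarrow> nat \<Rightarrow> 'e \<Rightarrow> real" where
    "cc i j = (if j = 2 then k12 else if i = 1 then k13 else k23)" for i j
  have index_pairs: "(i, j) \<in> {(1, 2), (1, 3), (2, 3)}" if "1 \<le> i \<and> i < j \<and> j \<le> 3" for i j :: nat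
    using that by auto
  have pair: "{i, j, 6 - i - j} = {1, 2, 3}" "distinct [i, j, 6 - i - j]"
    "pair_subnetwork c ?T (cc i j) (A i) (A j) (A (6 - i - j))"
    if "(i, j) \<in> {(1, 2), (1, 3), (2, 3)}" for i j :: nat
    using that parts unfolding cc_def by auto
  show ?thesis
  proof (intro exI[of _ cc] conjI)
    show "\<forall>e\<in>E. cc 1 2 e + cc 1 3 e + cc 2 3 e = c e"
      using sum by (simp add: cc_def)
    show "\<forall>k\<in>{1, 2, 3}. S (cc 1 2) ?T {A k} + S (cc 1 3) ?T {A k} + S (cc 2 3) ?T {A k} = S c ?T {A k}"
      using S_sum by (simp add: cc_def)
  qed (use pair_subnetwork_indexed[where A = A, OF refl TV inj pair[OF index_pairs]] in blast)+
qed

end
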